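(* Let $m>0$, $n$ an odd positive integer, $V=[-m/2,m/2]$. For every $D\in\mathcal{CTM}$ and every $j\in\{-\lceil n/2\rceil+1,\dots,0,\dots,n-\lceil n/2\rceil\}$, $$|x_{\lceil n/2\rceil}-x_{\lceil n/2\rceil+j}|\le |j|\cdot\frac{m}{\lceil n/2\rceil-1}.$$
   Context: A dataset is $D=(x_1,\dots,x_n)\in V^n$, indexed so that $x_1\le\dots\le x_n$. $\mathcal{CTM}$ is the set of datasets with $|x_{i+1}-x_i|\ge|x_{j+1}-x_j|$ for all $1\le i<j\le\lceil n/2\rceil-1$ and $|x_i-x_{i-1}|\ge|x_j-x_{j-1}|$ for all $\lceil n/2\rceil+1\le j<i\le n$. *)

theory Defs
  imports Complex_Main
begin

text \<open>A dataset of size n is represented as a function x :: nat => real, with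
  entries x 1, ..., x n (other indices are irrelevant).\<close>

definition half_ceil :: "nat \<Rightarrow> nat" where
  "half_ceil n = nat \<lceil>real n / 2\<rceil>"

definition dataset :: "real set \<Rightarrow> nat \<Rightarrow> (nat \<Rightarrow> real) \<Rightarrow> bool" where
  "dataset V n x \<longleftrightarrow> (\<forall>i\<in>{1..n}. x i \<in> V) \<and> (\<forall>i j. 1 \<le> i \<longrightarrow> i \<le> j \<longrightarrow> j \<le> n \<longrightarrow> x i \<le> x j)"

definition CTM :: "real set \<Rightarrow> nat \<Rightarrow> (nat \<Rightarrow> real) \<Rightarrow> bool" where
  "CTM V n x \<longleftrightarrow> dataset V n x \<and>
     (\<forall>i j. 1 \<le> i \<longrightarrow> i < j \<longrightarrow> j \<le> half_ceil n - 1 \<longrightarrow>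
        \<bar>x (i+1) - x i\<bar> \<ge> \<bar>x (j+1) - x j\<bar>) \<and>
     (\<forall>i j. half_ceil n + 1 \<le> j \<longrightarrow> j < i \<longrightarrow> i \<le> n \<longrightarrow>
        \<bar>x i - x (i-1)\<bar> \<ge> \<bar>x j - x (j-1)\<bar>)"

end

theory Submission
  imports Defs
begin

text \<open>Write n = 2p + 1, so the centre is x (p+1) and each half has p gaps. The CTM condition
  says the gaps shrink towards the centre. Hence the t gaps next to the centre are the t
  smallest of p gaps on that side, their sum is at most t/p times the total of that side,
  and that total is at most the diameter m of V.\<close>

lemma half_ceil_odd: "half_ceil (2 * p + 1) = p + 1"
proof -
  have "\<lceil>real (2 * p + 1) / 2\<rceil> = int p + 1"
    by (intro ceiling_unique) auto
  then show ?thesis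
    unfolding half_ceil_def by simp
qed

lemma half_ceil_pos: "0 < n \<Longrightarrow> 0 < half_ceil n"
  unfolding half_ceil_def by simp

lemma sum_prefix_le_average:
  fixes f :: "nat \<Rightarrow> 'a :: linordered_idom"
  assumes "mono_on {..<p} f" and "t \<le> p"
  shows "of_nat p * sum f {..<t} \<le> of_nat t * sum f {..<p}"
proof -
  have "of_nat (p - t) * sum f {..<t} = (\<Sum>a<t. \<Sum>b\<in>{t..<p}. f a)"
    by (simp add: sum_distrib_right mult.commute)
  also have "\<dots> \<le> (\<Sum>a<t. \<Sum>b\<in>{t..<p}. f b)"
    by (intro sum_mono mono_onD[OF assms(1)]) auto
  also have "\<dots> = of_nat t * sum f {t..<p}"
    by simp
  finally have "of_nat (p - t) * sum f {..<t} \<le> of_nat t * sum f {t..<p}" .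
  moreover have "sum f {..<p} = sum f {..<t} + sum f {t..<p}"
    using assms(2) by (metis atLeast0LessThan sum.atLeastLessThan_concat zero_le)
  moreover have "(of_nat p :: 'a) = of_nat t + of_nat (p - t)"
    using assms(2) by (simp flip: of_nat_add)
  ultimately show ?thesis
    by (simp add: algebra_simps)
qed

lemma increment_le_average_increment:
  fixes y :: "nat \<Rightarrow> real"
  assumes "mono_on {..<p} (\<lambda>i. y (Suc i) - y i)" and "y p - y 0 \<le> m" and "t \<le> p"
  shows "y t - y 0 \<le> real t * (m / real p)"
proof (cases "p = 0")
  case False
  have "real p * (y t - y 0) \<le> real t * (y p - y 0)"
    using sum_prefix_le_average[OF assms(1,3)] by (simp add: sum_lessThan_telescope)
  also have "\<dots> \<le> real t * m"
    using assms(2) by (simp add: mult_left_mono)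
  finally show ?thesis
    using False by (simp add: field_simps)
qed (use assms(3) in simp)

lemma CTM_sorted:
  assumes "CTM V n x" and "1 \<le> i" and "i \<le> j" and "j \<le> n"
  shows "x i \<le> x j"
  using assms unfolding CTM_def dataset_def by blast

lemma CTM_span:
  assumes "CTM {lo..hi} n x" and "1 \<le> a" and "a \<le> n" and "1 \<le> b" and "b \<le> n"
  shows "x b - x a \<le> hi - lo"
proof -
  have "x a \<in> {lo..hi}" and "x b \<in> {lo..hi}"
    using assms unfolding CTM_def dataset_def by simp_all
  then show ?thesis
    by simp
qed

lemma CTM_left_gap_antimono:
  assumes "CTM V n x" and "1 \<le> i" and "i \<le> j" and "j < half_ceil n" and "j < n"
  shows "x (Suc j) - x j \<le> x (Suc i) - x i"
proof (cases "i = j")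
  case False
  then have "\<bar>x (j + 1) - x j\<bar> \<le> \<bar>x (i + 1) - x i\<bar>"
    using assms(1-4) unfolding CTM_def by auto
  moreover have "x i \<le> x (Suc i)" "x j \<le> x (Suc j)"
    using CTM_sorted[OF assms(1)] assms(2-5) by auto
  ultimately show ?thesis
    by simp
qed simp

lemma CTM_right_gap_mono:
  assumes "CTM V n x" and "half_ceil n \<le> i" and "i \<le> j" and "j < n"
  shows "x (Suc i) - x i \<le> x (Suc j) - x j"
proof (cases "i = j")
  case False
  have "\<forall>i j. half_ceil n + 1 \<le> j \<longrightarrow> j < i \<longrightarrow> i \<le> n \<longrightarrow>
      \<bar>x j - x (j - 1)\<bar> \<le> \<bar>x i - x (i - 1)\<bar>"
    using assms(1) unfolding CTM_def by blast
  from this[rule_format, of "Suc i" "Suc j"]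
  have "\<bar>x (Suc i) - x i\<bar> \<le> \<bar>x (Suc j) - x j\<bar>"
    using assms(2-4) False by simp
  moreover have "x i \<le> x (Suc i)" "x j \<le> x (Suc j)"
    using CTM_sorted[OF assms(1)] half_ceil_pos[of n] assms(2-4) by auto
  ultimately show ?thesis
    by simp
qed simp

lemma CTM_left_distance_from_centre:
  assumes "CTM {lo..hi} (2 * p + 1) x" and "t \<le> p"
  shows "\<bar>x (p + 1) - x (p + 1 - t)\<bar> \<le> real t * ((hi - lo) / real p)"
proof -
  \<comment> \<open>the left half read outwards from the centre, negated so that it increases\<close>
  let ?y = "\<lambda>i. - x (p + 1 - i)"
  have "?y t - ?y 0 \<le> real t * ((hi - lo) / real p)"
  proof (rule increment_le_average_increment)
    show "mono_on {..<p} (\<lambda>i. ?y (Suc i) - ?y i)"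
    proof (rule mono_onI)
      fix a b
      assume "a \<in> {..<p}" and "b \<in> {..<p}" and "a \<le> b"
      then show "?y (Suc a) - ?y a \<le> ?y (Suc b) - ?y b"
        using CTM_left_gap_antimono[OF assms(1), of "p - b" "p - a"] half_ceil_odd[of p]
        by (simp add: Suc_diff_le)
    qed
    show "?y p - ?y 0 \<le> hi - lo"
      using CTM_span[OF assms(1), of 1 "p + 1"] by simp
  qed (use assms in auto)
  moreover have "x (p + 1 - t) \<le> x (p + 1)"
    using CTM_sorted[OF assms(1)] assms(2) by auto
  ultimately show ?thesis
    by simp
qed

lemma CTM_right_distance_from_centre:
  assumes "CTM {lo..hi} (2 * p + 1) x" and "t \<le> p"
  shows "\<bar>x (p + 1) - x (p + 1 + t)\<bar> \<le> real t * ((hi - lo) / real p)"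
proof -
  let ?y = "\<lambda>i. x (p + 1 + i)"
  have "?y t - ?y 0 \<le> real t * ((hi - lo) / real p)"
  proof (rule increment_le_average_increment)
    show "mono_on {..<p} (\<lambda>i. ?y (Suc i) - ?y i)"
    proof (rule mono_onI)
      fix a b
      assume "a \<in> {..<p}" and "b \<in> {..<p}" and "a \<le> b"
      then show "?y (Suc a) - ?y a \<le> ?y (Suc b) - ?y b"
        using CTM_right_gap_mono[OF assms(1), of "p + 1 + a" "p + 1 + b"] half_ceil_odd[of p]
        by simp
    qed
    show "?y p - ?y 0 \<le> hi - lo"
      using CTM_span[OF assms(1), of "p + 1" "p + 1 + p"] by simp
  qed (use assms in auto)
  moreover have "x (p + 1) \<le> x (p + 1 + t)"
    using CTM_sorted[OF assms(1)] assms(2) by auto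
  ultimately show ?thesis
    by simp
qed

theorem lemma7p11:
  fixes m :: real and n :: nat and x :: "nat \<Rightarrow> real" and j :: int
  assumes "m > 0" and "odd n" and "n > 0"
    and "CTM {-m/2..m/2} n x"
    and "- int (half_ceil n) + 1 \<le> j" and "j \<le> int n - int (half_ceil n)"
  shows "\<bar>x (half_ceil n) - x (nat (int (half_ceil n) + j))\<bar>
           \<le> real_of_int \<bar>j\<bar> * (m / (real (half_ceil n) - 1))"
proof -
  obtain p where n: "n = 2 * p + 1"
    using assms(2) oddE by blast
  have centre: "half_ceil n = p + 1"
    using half_ceil_odd n by simp
  have ctm: "CTM {-m/2..m/2} (2 * p + 1) x"
    using assms(4) n by simp
  show ?thesis
  proof (cases "j \<le> 0")
    case True
    define t where "t = nat (- j)"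
    have "t \<le> p" and "j = - int t" and "nat (int (half_ceil n) + j) = p + 1 - t"
      using True assms(5) centre unfolding t_def by auto
    then show ?thesis
      using CTM_left_distance_from_centre[OF ctm] centre by simp
  next
    case False
    define t where "t = nat j"
    have "t \<le> p" and "j = int t" and "nat (int (half_ceil n) + j) = p + 1 + t"
      using False assms(6) centre n unfolding t_def by auto
    then show ?thesis
      using CTM_right_distance_from_centre[OF ctm] centre by simp
  qed
qed

end
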